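(* Let $\Pi$ be an infinite atomless L\'evy measure on $(0,\infty)$ (of a driftless subordinator), with $\overline{\Pi}(x)=\Pi((x,\infty))$ and $\overline{\Pi}^{\leftarrow}(y)=\inf\{x>0:\overline{\Pi}(x)\le y\}$. Suppose there exist deterministic $a_r>0$, $b_r\in\mathbb{R}$ and $\gamma<0$ such that for every $x$ with $a_rx+b_r>0$ and $1-\gamma x>0$, $\lim_{r\to\infty}(r-\overline{\Pi}(a_rx+b_r))/\sqrt r=-\tfrac{2}{\gamma}\log(1-\gamma x)$. Put $b_r=\overline{\Pi}^{\leftarrow}(r)$. Then: (i) for every $p\ge1$, $\int_0^{b_r}u^p\,\Pi(\mathrm{d}u)\sim\frac{2}{p|\gamma|}b_r^p\sqrt r$ as $r\to\infty$; in particular $\sigma^2(b_r)\sim\frac1{|\gamma|}b_r^2\sqrt r$; (ii) $\overline{\Pi}$ is slowly varying at $0$, $\sigma^2$ is regularly varying at $0$ with index $2$, and $G(x)=e^{-\sqrt{\overline{\Pi}(x)}}$, $x>0$, is regularly varying at $0$ with index $1/|\gamma|$.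
   Context: $\sigma^2(t)=\int_0^t x^2\,\Pi(\mathrm{d}x)$, $t>0$. *)

theory Defs
  imports "HOL-Analysis.Analysis" "HOL-Library.Landau_Symbols"
begin

definition subordinator_levy_measure :: "real measure \<Rightarrow> bool" where
  "subordinator_levy_measure M \<longleftrightarrow>
     sets M = sets borel \<and> emeasure M {..0} = 0 \<and>
     (\<integral>\<^sup>+ x. ennreal (min 1 x) \<partial>M) < \<infinity>"

definition infinite_measure :: "real measure \<Rightarrow> bool" where
  "infinite_measure M \<longleftrightarrow> emeasure M {0<..} = \<infinity>"

definition atomless :: "real measure \<Rightarrow> bool" where
  "atomless M \<longleftrightarrow> (\<forall>x. emeasure M {x} = 0)"

definition Pibar :: "real measure \<Rightarrow> real \<Rightarrow> real" where
  "Pibar M x = measure M {x<..}"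

definition Pibar_inv :: "real measure \<Rightarrow> real \<Rightarrow> real" where
  "Pibar_inv M y = Inf {x. x > 0 \<and> Pibar M x \<le> y}"

definition sigma2 :: "real measure \<Rightarrow> real \<Rightarrow> real" where
  "sigma2 M t = (LINT x:{0..t}|M. x ^ 2)"

definition regvar_at_0 :: "(real \<Rightarrow> real) \<Rightarrow> real \<Rightarrow> bool" where
  "regvar_at_0 f \<rho> \<longleftrightarrow> (\<forall>\<^sub>F x in at_right 0. f x > 0) \<and>
     (\<forall>l>0. ((\<lambda>x. f (l * x) / f x) \<longlongrightarrow> l powr \<rho>) (at_right 0))"

definition slowvar_at_0 :: "(real \<Rightarrow> real) \<Rightarrow> bool" where
  "slowvar_at_0 f \<longleftrightarrow> regvar_at_0 f 0"

end

theory Submission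
  imports Defs
begin

text \<open>Write \<open>\<Pi>\<close> for \<^const>\<open>Pibar\<close> and put \<open>L = |\<gamma>| sqrt \<Pi>\<close>, \<open>A r = a r / |\<gamma>|\<close>, \<open>d r = b r - A r\<close>.
  The hypothesis says \<open>L (A r * \<sigma> + d r) - |\<gamma>| sqrt r \<rightarrow> - ln \<sigma>\<close> for every \<open>\<sigma> > 0\<close>; as \<open>L\<close> is
  decreasing, this persists along arguments whose normalised position converges. Replacing \<open>r\<close>
  by \<open>(sqrt r + 1 / |\<gamma>|)\<^sup>2\<close> raises \<open>|\<gamma>| sqrt r\<close> by one, so \<open>A\<close> contracts by the factor
  \<open>exp (- 1)\<close> while \<open>d\<close> moves by \<open>o(A)\<close>; iterating gives \<open>d r = o(A r)\<close>. The centring can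
  therefore be dropped, and substituting \<open>r = \<Pi> y\<close> gives \<open>L (l * y) - L y \<rightarrow> - ln l\<close> as
  \<open>y \<rightarrow> 0\<close>, from which part (ii) follows. For part (i), Fubini gives
  \<open>\<integral>\<^sub>0\<^sup>w u powr p \<Pi>(du) = w powr p * \<integral>\<^sub>0\<^sup>1 p t powr (p - 1) (\<Pi> (w t) - \<Pi> w) dt\<close>;
  after division by \<open>2 sqrt (\<Pi> w)\<close> the integrand tends to \<open>p t powr (p - 1) (- ln t) / |\<gamma>|\<close>,
  a Potter-type bound on \<open>L\<close> supplies domination, and \<open>\<integral>\<^sub>0\<^sup>1 p t powr (p - 1) (- ln t) dt = 1 / p\<close>.
  Finally \<open>\<Pi> (\<Pi>\<^sup>\<leftarrow> r) = r\<close> because atomlessness makes \<open>\<Pi>\<close> continuous.\<close>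

lemma minus_ln_le_powr:
  fixes t s :: real
  assumes "0 < t" "0 < s"
  shows "- ln t \<le> t powr (- s) / s"
proof -
  have "ln (t powr (- s)) \<le> t powr (- s) - 1"
    using assms by (intro ln_le_minus_one) simp
  then show ?thesis
    using assms by (simp add: field_simps)
qed

lemma eventually_at_right_0_lt_1: "\<forall>\<^sub>F t in at_right (0::real). 0 < t \<and> t < 1"
  by (simp add: eventually_at_right_field) (auto intro!: exI[of _ 1])

lemma powr_mult_ln_tendsto_0:
  fixes q :: real
  assumes q: "0 < q"
  shows "((\<lambda>t. t powr q * ln t) \<longlongrightarrow> 0) (at_right 0)"
proof (rule Lim_null_comparison)
  have "((\<lambda>t. t powr (q / 2)) \<longlongrightarrow> 0) (at_right 0)"
    using q by (intro tendsto_zero_powrI[OF tendsto_ident_at tendsto_const])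
      (auto intro: eventually_mono[OF eventually_at_right_less])
  then show "((\<lambda>t. 2 / q * t powr (q / 2)) \<longlongrightarrow> 0) (at_right 0)"
    by (rule tendsto_mult_right_zero)
  show "\<forall>\<^sub>F t in at_right 0. norm (t powr q * ln t) \<le> 2 / q * t powr (q / 2)"
    using eventually_at_right_0_lt_1
  proof eventually_elim
    case (elim t)
    have "norm (t powr q * ln t) = t powr q * (- ln t)"
      using elim by (simp add: abs_mult)
    also have "\<dots> \<le> t powr q * (t powr (- (q / 2)) / (q / 2))"
      using elim q by (intro mult_left_mono minus_ln_le_powr) auto
    also have "\<dots> = 2 / q * t powr (q / 2)"
      using elim by (simp add: powr_add[symmetric])
    finally show ?case .
  qed
qed

lemma ln_gap_smallE:
  fixes \<tau> \<epsilon> :: real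
  assumes "0 < \<tau>" "0 < \<epsilon>"
  obtains \<eta> where "0 < \<eta>" "\<eta> < \<tau>" "ln (\<tau> + \<eta>) - ln (\<tau> - \<eta>) < \<epsilon>"
proof -
  have "((\<lambda>\<eta>. ln (\<tau> + \<eta>) - ln (\<tau> - \<eta>)) \<longlongrightarrow> ln (\<tau> + 0) - ln (\<tau> - 0)) (at_right 0)"
    using assms by (intro tendsto_intros) auto
  then have "\<forall>\<^sub>F \<eta> in at_right 0. ln (\<tau> + \<eta>) - ln (\<tau> - \<eta>) < \<epsilon>"
    using assms by (intro order_tendstoD) auto
  then obtain b where "0 < b" "\<And>\<eta>. 0 < \<eta> \<Longrightarrow> \<eta> < b \<Longrightarrow> ln (\<tau> + \<eta>) - ln (\<tau> - \<eta>) < \<epsilon>"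
    unfolding eventually_at_right_field by auto
  with assms show thesis
    by (intro that[of "min (b / 2) (\<tau> / 2)"]) auto
qed

lemma sqrt_diff_eq:
  fixes p r :: real
  assumes "0 < r" "0 \<le> p"
  shows "sqrt p - sqrt r = - ((r - p) / sqrt r) / (sqrt (p / r) + 1)"
proof -
  have pos: "0 < sqrt p + sqrt r"
    using assms by (simp add: add_nonneg_pos)
  have "sqrt p - sqrt r = - (r - p) / (sqrt p + sqrt r)"
    using assms pos by (simp add: field_simps)
  also have "\<dots> = - ((r - p) / sqrt r) / ((sqrt p + sqrt r) / sqrt r)"
    using assms by simp
  also have "(sqrt p + sqrt r) / sqrt r = sqrt (p / r) + 1"
    using assms by (simp add: real_sqrt_divide add_divide_distrib)
  finally show ?thesis .
qed

lemma quadratic_log_bound: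
  fixes D t c l :: real
  assumes t: "0 < t" "t \<le> 1" and c: "0 < c" "c \<le> l" and D: "0 \<le> D" "D \<le> 1 + 2 * (- ln t)"
  shows "D / c + D\<^sup>2 * inverse l / (2 * c) \<le> (9 / c + (9 / c)\<^sup>2) * t powr (- 1 / 2)"
proof -
  define x where "x = t powr (- 1 / 4)"
  define K where "K = 9 / c"
  have "0 < K"
    using c by (simp add: K_def)
  have "1 \<le> x"
    using t powr_le1[of "1 / 4" t] by (simp add: x_def powr_minus one_le_inverse_iff)
  moreover have "- ln t \<le> 4 * x"
    using minus_ln_le_powr[of t "1 / 4"] t by (simp add: x_def)
  ultimately have D_c: "D / c \<le> K * x"
    using D c by (simp add: K_def divide_right_mono)
  have "D\<^sup>2 * inverse l / (2 * c) \<le> D\<^sup>2 * inverse c / c"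
    using c by (intro divide_mono mult_left_mono le_imp_inverse_le) auto
  also have "\<dots> = (D / c)\<^sup>2"
    by (simp add: power2_eq_square field_simps)
  also have "\<dots> \<le> (K * x)\<^sup>2"
    using D c D_c by (intro power_mono) auto
  finally have "D\<^sup>2 * inverse l / (2 * c) \<le> (K * x)\<^sup>2" .
  moreover have "K * x \<le> K * x\<^sup>2"
    using \<open>0 < K\<close> \<open>1 \<le> x\<close> by (simp add: power2_eq_square)
  ultimately have "D / c + D\<^sup>2 * inverse l / (2 * c) \<le> (K + K\<^sup>2) * x\<^sup>2"
    using D_c by (simp add: power_mult_distrib algebra_simps)
  moreover have "x\<^sup>2 = t powr (- 1 / 2)"
    using t by (simp add: x_def power2_eq_square powr_add[symmetric])
  ultimately show ?thesis
    by (simp add: K_def)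
qed

lemma nn_integral_powr_derivative:
  fixes u p :: real
  assumes "0 \<le> u" "0 < p"
  shows "(\<integral>\<^sup>+ v. ennreal (p * v powr (p - 1)) * indicator {0..u} v \<partial>lborel) = ennreal (u powr p)"
proof -
  have "((\<lambda>v. v powr (p - 1)) has_integral (u powr (p - 1 + 1) / (p - 1 + 1))) {0..u}"
    using assms by (intro has_integral_powr_from_0) auto
  then have "((\<lambda>v. p * v powr (p - 1)) has_integral p * (u powr p / p)) {0..u}"
    using assms by (intro has_integral_mult_right) simp
  then have "((\<lambda>v. p * v powr (p - 1)) has_integral u powr p) {0..u}"
    using assms by simp
  then show ?thesis
    using assms by (intro nn_integral_has_integral_lebesgue') auto
qed

lemma has_integral_powr_minus_ln:
  fixes p :: real
  assumes p: "0 < p"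
  shows "((\<lambda>t. p * t powr (p - 1) * (- ln t)) has_integral 1 / p) {0..1}"
proof -
  define F where "F t = t powr p / p - t powr p * ln t" for t :: real
  have "(F has_vector_derivative p * t powr (p - 1) * (- ln t)) (at t)" if "t \<in> {0<..<1}" for t
  proof -
    have t: "0 < t"
      using that by simp
    have pow: "((\<lambda>t. t powr p) has_real_derivative p * t powr (p - 1)) (at t)"
      by (rule has_real_derivative_powr[OF t])
    have "(F has_real_derivative
        p * t powr (p - 1) / p - (p * t powr (p - 1) * ln t + inverse t * t powr p)) (at t)"
      unfolding F_def by (intro DERIV_diff DERIV_cdivide DERIV_mult pow DERIV_ln t)
    moreover have "t powr p * inverse t = t powr (p - 1)"
      using t by (simp add: powr_diff inverse_eq_divide)
    ultimately show ?thesis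
      using p by (simp add: has_real_derivative_iff_has_vector_derivative algebra_simps)
  qed
  moreover have "continuous_on {0..1} F"
  proof (rule continuous_on_IccI)
    have "((\<lambda>t. t powr p / p - t powr p * ln t) \<longlongrightarrow> 0 / p - 0) (at_right 0)"
      using p by (intro tendsto_intros powr_mult_ln_tendsto_0
          tendsto_zero_powrI[OF tendsto_ident_at tendsto_const]) (auto intro: eventually_mono[OF eventually_at_right_less])
    then show "(F \<longlongrightarrow> F 0) (at_right 0)"
      by (simp add: F_def[abs_def])
    have "isCont F t" if "0 < t" for t
      using that p unfolding F_def by (intro continuous_intros) auto
    then show "(F \<longlongrightarrow> F 1) (at_left 1)" "\<And>t. 0 < t \<Longrightarrow> t < 1 \<Longrightarrow> (F \<longlongrightarrow> F t) (at t)"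
      by (auto simp: isCont_def intro: tendsto_mono[OF at_le[OF subset_UNIV]])
  qed simp
  ultimately have "((\<lambda>t. p * t powr (p - 1) * (- ln t)) has_integral (F 1 - F 0)) {0..1}"
    by (intro fundamental_theorem_of_calculus_interior) auto
  then show ?thesis
    by (simp add: F_def)
qed

lemma decseq_Ioi_approx:
  fixes x :: real
  assumes "0 < x"
  shows "decseq (\<lambda>n. {x - x / real (n + 2)<..})"
  using assms by (auto simp: decseq_def intro!: divide_left_mono elim!: le_less_trans[rotated])

lemma INT_Ioi_approx:
  fixes x :: real
  assumes x: "0 < x"
  shows "(\<Inter>n. {x - x / real (n + 2)<..}) = {x..}"
proof (intro set_eqI iffI)
  fix y
  assume y: "y \<in> (\<Inter>n. {x - x / real (n + 2)<..})"
  show "y \<in> {x..}"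
  proof (rule ccontr)
    assume "y \<notin> {x..}"
    then have "y < x"
      by simp
    then have "0 < (x - y) / x"
      using x by simp
    then obtain n where "1 / real (Suc n) < (x - y) / x"
      by (rule nat_approx_posE)
    then have "x / real (n + 2) < x - y"
      using x \<open>y < x\<close> by (simp add: field_simps)
    moreover have "x - x / real (n + 2) < y"
      using y by blast
    ultimately show False
      by simp
  qed
next
  fix y
  assume "y \<in> {x..}"
  have "x - x / real (n + 2) < y" for n
  proof -
    have "0 < x / real (n + 2)"
      using x by simp
    with \<open>y \<in> {x..}\<close> show ?thesis
      by simp
  qed
  then show "y \<in> (\<Inter>n. {x - x / real (n + 2)<..})"
    by simp
qed

lemma filterlim_funpow_at_top:
  fixes \<phi> :: "real \<Rightarrow> real"
  assumes \<phi>: "\<And>r. 0 \<le> r \<Longrightarrow> r + c \<le> \<phi> r" and c: "0 < c" and r: "0 \<le> r"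
  shows "filterlim (\<lambda>k. (\<phi> ^^ k) r) at_top sequentially"
proof -
  have iter_ge: "r + k * c \<le> (\<phi> ^^ k) r" for k
  proof (induction k)
    case (Suc k)
    have "0 \<le> r + k * c"
      using r c by simp
    with Suc.IH have "(\<phi> ^^ k) r + c \<le> (\<phi> ^^ Suc k) r"
      using \<phi>[of "(\<phi> ^^ k) r"] by simp
    with Suc.IH show ?case
      by (simp add: algebra_simps)
  qed simp
  have "filterlim (\<lambda>k. r + real k * c) at_top sequentially"
    by (intro filterlim_tendsto_add_at_top[OF tendsto_const]
        filterlim_at_top_mult_tendsto_pos[OF tendsto_const c filterlim_real_sequentially])
  then show ?thesis
    by (rule filterlim_at_top_mono) (use iter_ge in simp)
qed

lemma funpow_geometric_bound:
  fixes A d \<phi> :: "real \<Rightarrow> real" and q e R r :: real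
  assumes step: "\<And>x. R \<le> x \<Longrightarrow> R \<le> \<phi> x \<and> A (\<phi> x) \<le> q * A x \<and> \<bar>d (\<phi> x) - d x\<bar> \<le> e * A x"
    and q: "0 \<le> q" "q < 1" and e: "0 \<le> e" and r: "R \<le> r"
  shows "R \<le> (\<phi> ^^ k) r \<and> A ((\<phi> ^^ k) r) \<le> q ^ k * A r \<and>
    \<bar>d ((\<phi> ^^ k) r) - d r\<bar> \<le> e * A r * (1 - q ^ k) / (1 - q)"
proof (induction k)
  case (Suc k)
  then have IH: "R \<le> (\<phi> ^^ k) r" "A ((\<phi> ^^ k) r) \<le> q ^ k * A r"
      "\<bar>d ((\<phi> ^^ k) r) - d r\<bar> \<le> e * A r * (1 - q ^ k) / (1 - q)"
    by simp_all
  note next_step = step[OF IH(1)]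
  have "q * A ((\<phi> ^^ k) r) \<le> q * (q ^ k * A r)"
    using IH(2) q by (intro mult_left_mono) auto
  moreover have "e * A ((\<phi> ^^ k) r) \<le> e * (q ^ k * A r)"
    using IH(2) e by (intro mult_left_mono) auto
  moreover have "e * (q ^ k * A r) + e * A r * (1 - q ^ k) / (1 - q) = e * A r * (1 - q ^ Suc k) / (1 - q)"
    using q by (simp add: field_simps)
  moreover have "\<bar>d ((\<phi> ^^ Suc k) r) - d r\<bar>
      \<le> \<bar>d ((\<phi> ^^ Suc k) r) - d ((\<phi> ^^ k) r)\<bar> + \<bar>d ((\<phi> ^^ k) r) - d r\<bar>"
    by arith
  ultimately show ?case
    using next_step IH(3) by (simp add: mult.assoc)
qed (use r in simp)

lemma funpow_telescoping_bound:
  fixes A d \<phi> :: "real \<Rightarrow> real" and q e R r :: real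
  assumes step: "\<And>x. R \<le> x \<Longrightarrow> R \<le> \<phi> x \<and> A (\<phi> x) \<le> q * A x \<and> \<bar>d (\<phi> x) - d x\<bar> \<le> e * A x"
    and q: "0 \<le> q" "q < 1" and e: "0 \<le> e" and A: "0 \<le> A r" and r: "R \<le> r"
    and d: "(d \<longlongrightarrow> 0) at_top" and iterates: "filterlim (\<lambda>k. (\<phi> ^^ k) r) at_top sequentially"
  shows "\<bar>d r\<bar> \<le> e * A r / (1 - q)"
proof -
  have "(\<lambda>k. \<bar>d ((\<phi> ^^ k) r) - d r\<bar>) \<longlonglongrightarrow> \<bar>0 - d r\<bar>"
    by (intro tendsto_intros filterlim_compose[OF d iterates])
  moreover have "\<bar>d ((\<phi> ^^ k) r) - d r\<bar> \<le> e * A r / (1 - q)" for k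
  proof -
    have "e * A r * (1 - q ^ k) \<le> e * A r"
      using q e A by (simp add: mult_left_le)
    then have "e * A r * (1 - q ^ k) / (1 - q) \<le> e * A r / (1 - q)"
      using q by (simp add: divide_right_mono)
    with funpow_geometric_bound[OF step q e r, of k] show ?thesis
      by linarith
  qed
  ultimately show ?thesis
    by (auto intro: LIMSEQ_le_const2)
qed

lemma ratio_tendsto_0_by_iteration:
  fixes A d \<phi> :: "real \<Rightarrow> real" and c \<kappa> :: real
  assumes A: "\<And>r. 0 < A r" and d: "(d \<longlongrightarrow> 0) at_top"
    and \<phi>: "\<And>r. 0 \<le> r \<Longrightarrow> r + c \<le> \<phi> r" and c: "0 < c"
    and contract: "((\<lambda>r. A (\<phi> r) / A r) \<longlongrightarrow> \<kappa>) at_top" and \<kappa>: "\<kappa> < 1"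
    and increment: "((\<lambda>r. (d (\<phi> r) - d r) / A r) \<longlongrightarrow> 0) at_top"
  shows "((\<lambda>r. d r / A r) \<longlongrightarrow> 0) at_top"
proof (rule tendstoI)
  fix \<epsilon> :: real
  assume \<epsilon>: "0 < \<epsilon>"
  have "0 \<le> \<kappa>"
    using A by (intro tendsto_lowerbound[OF contract] always_eventually allI) (auto intro: less_imp_le)
  define q where "q = (1 + \<kappa>) / 2"
  have q: "0 \<le> q" "q < 1" "\<kappa> < q"
    using \<kappa> \<open>0 \<le> \<kappa>\<close> by (auto simp: q_def)
  define e where "e = \<epsilon> * (1 - q) / 2"
  have e: "0 < e"
    using \<epsilon> q by (simp add: e_def)
  have "\<forall>\<^sub>F r in at_top. 0 \<le> r \<and> A (\<phi> r) \<le> q * A r \<and> \<bar>d (\<phi> r) - d r\<bar> \<le> e * A r"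
    using order_tendstoD(2)[OF contract q(3)] tendstoD[OF increment e] eventually_ge_at_top[of 0]
  proof eventually_elim
    case (elim r)
    with A[of r] show ?case
      by (simp add: dist_real_def abs_divide divide_less_eq)
  qed
  then obtain R where R: "\<And>r. R \<le> r \<Longrightarrow> 0 \<le> r \<and> A (\<phi> r) \<le> q * A r \<and> \<bar>d (\<phi> r) - d r\<bar> \<le> e * A r"
    unfolding eventually_at_top_linorder by blast
  have step: "R \<le> \<phi> x \<and> A (\<phi> x) \<le> q * A x \<and> \<bar>d (\<phi> x) - d x\<bar> \<le> e * A x" if "R \<le> x" for x
    using R[OF that] \<phi>[of x] c that by simp
  have bound: "\<bar>d r\<bar> \<le> e * A r / (1 - q)" if r: "R \<le> r" for r
    using R[OF r] A[of r] e q
    by (intro funpow_telescoping_bound[OF step _ _ _ _ r d] filterlim_funpow_at_top[OF \<phi> c]) auto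
  have small: "e * A r / (1 - q) < \<epsilon> * A r" for r
    using \<epsilon> q A[of r] by (simp add: e_def field_simps)
  show "\<forall>\<^sub>F r in at_top. dist (d r / A r) 0 < \<epsilon>"
    using eventually_ge_at_top[of R]
  proof eventually_elim
    case (elim r)
    with bound[of r] small[of r] have "\<bar>d r\<bar> < \<epsilon> * A r"
      by linarith
    with A[of r] show ?case
      by (simp add: abs_divide divide_less_eq)
  qed
qed

section \<open>Monotone functions under logarithmic scaling\<close>

definition ln_scaling ::
    "(real \<Rightarrow> real) \<Rightarrow> ('a \<Rightarrow> real) \<Rightarrow> ('a \<Rightarrow> real) \<Rightarrow> ('a \<Rightarrow> real) \<Rightarrow> 'a filter \<Rightarrow> bool"
  where "ln_scaling L \<beta> e c F \<longleftrightarrow>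
    (\<forall>\<sigma>>0. (\<forall>\<^sub>F i in F. 0 < \<beta> i * \<sigma> + e i) \<and>
            ((\<lambda>i. L (\<beta> i * \<sigma> + e i) - c i) \<longlongrightarrow> - ln \<sigma>) F)"

lemma ln_scalingI:
  assumes "\<And>\<sigma>. 0 < \<sigma> \<Longrightarrow> \<forall>\<^sub>F i in F. 0 < \<beta> i * \<sigma> + e i"
    and "\<And>\<sigma>. 0 < \<sigma> \<Longrightarrow> ((\<lambda>i. L (\<beta> i * \<sigma> + e i) - c i) \<longlongrightarrow> - ln \<sigma>) F"
  shows "ln_scaling L \<beta> e c F"
  using assms by (simp add: ln_scaling_def)

lemma ln_scalingD:
  assumes "ln_scaling L \<beta> e c F" "0 < \<sigma>"
  shows "\<forall>\<^sub>F i in F. 0 < \<beta> i * \<sigma> + e i"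
    and "((\<lambda>i. L (\<beta> i * \<sigma> + e i) - c i) \<longlongrightarrow> - ln \<sigma>) F"
  using assms by (simp_all add: ln_scaling_def)

lemma ln_scaling_tendsto:
  fixes L :: "real \<Rightarrow> real" and \<beta> e c z :: "'a \<Rightarrow> real"
  assumes L: "antimono_on {0<..} L" and scale: "ln_scaling L \<beta> e c F"
    and \<beta>: "\<forall>\<^sub>F i in F. 0 < \<beta> i"
    and z: "((\<lambda>i. (z i - e i) / \<beta> i) \<longlongrightarrow> \<tau>) F" and \<tau>: "0 < \<tau>"
  shows "((\<lambda>i. L (z i) - c i) \<longlongrightarrow> - ln \<tau>) F"
proof (rule tendstoI)
  fix \<epsilon> :: real
  assume \<epsilon>: "0 < \<epsilon>"
  obtain \<eta> where \<eta>: "0 < \<eta>" "\<eta> < \<tau>" "ln (\<tau> + \<eta>) - ln (\<tau> - \<eta>) < \<epsilon> / 2"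
    using ln_gap_smallE[OF \<tau>, of "\<epsilon> / 2"] \<epsilon> by auto
  have ln_mono: "ln (\<tau> - \<eta>) \<le> ln \<tau>" "ln \<tau> \<le> ln (\<tau> + \<eta>)"
    using \<eta> \<tau> by simp_all
  have lo: "0 < \<tau> - \<eta>" and hi: "0 < \<tau> + \<eta>" and \<epsilon>2: "0 < \<epsilon> / 2"
    using \<eta> \<epsilon> by simp_all
  show "\<forall>\<^sub>F i in F. dist (L (z i) - c i) (- ln \<tau>) < \<epsilon>"
    using tendstoD[OF z \<eta>(1)] ln_scalingD(1)[OF scale lo] \<beta>
      tendstoD[OF ln_scalingD(2)[OF scale lo] \<epsilon>2] tendstoD[OF ln_scalingD(2)[OF scale hi] \<epsilon>2]
  proof eventually_elim
    case (elim i)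
    then have "\<beta> i * (\<tau> - \<eta>) + e i < z i" "z i < \<beta> i * (\<tau> + \<eta>) + e i"
      by (auto simp: dist_real_def abs_less_iff field_simps)
    then have "L (z i) \<le> L (\<beta> i * (\<tau> - \<eta>) + e i)" "L (\<beta> i * (\<tau> + \<eta>) + e i) \<le> L (z i)"
      using elim(2) by (auto intro!: monotone_onD[OF L])
    then show ?case
      using elim(4,5) ln_mono \<eta>(3) unfolding dist_real_def abs_less_iff by linarith
  qed
qed

lemma ln_scaling_tendsto_inverse:
  fixes L :: "real \<Rightarrow> real" and \<beta> e c z :: "'a \<Rightarrow> real"
  assumes L: "antimono_on {0<..} L" and scale: "ln_scaling L \<beta> e c F"
    and \<beta>: "\<forall>\<^sub>F i in F. 0 < \<beta> i"
    and z: "((\<lambda>i. L (z i) - c i) \<longlongrightarrow> - ln \<tau>) F" and \<tau>: "0 < \<tau>"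
    and z_pos: "\<forall>\<^sub>F i in F. 0 < z i"
  shows "((\<lambda>i. (z i - e i) / \<beta> i) \<longlongrightarrow> \<tau>) F"
proof (rule tendstoI)
  fix \<epsilon> :: real
  assume \<epsilon>: "0 < \<epsilon>"
  define \<eta> where "\<eta> = min \<epsilon> (\<tau> / 2)"
  have lo: "0 < \<tau> - \<eta>" and hi: "0 < \<tau> + \<eta>" and "0 < \<eta>" "\<eta> \<le> \<epsilon>"
    using \<tau> \<epsilon> by (auto simp: \<eta>_def)
  define \<delta> where "\<delta> = min (ln (\<tau> + \<eta>) - ln \<tau>) (ln \<tau> - ln (\<tau> - \<eta>)) / 2"
  have \<delta>: "0 < \<delta>"
    using \<tau> lo \<open>0 < \<eta>\<close> by (simp add: \<delta>_def)
  have \<delta>_le: "2 * \<delta> \<le> ln (\<tau> + \<eta>) - ln \<tau>" "2 * \<delta> \<le> ln \<tau> - ln (\<tau> - \<eta>)"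
    by (simp_all add: \<delta>_def)
  show "\<forall>\<^sub>F i in F. dist ((z i - e i) / \<beta> i) \<tau> < \<epsilon>"
    using tendstoD[OF ln_scalingD(2)[OF scale hi] \<delta>] tendstoD[OF ln_scalingD(2)[OF scale lo] \<delta>]
      tendstoD[OF z \<delta>] ln_scalingD(1)[OF scale hi] \<beta> z_pos
  proof eventually_elim
    case (elim i)
    then have "L (\<beta> i * (\<tau> + \<eta>) + e i) < L (z i)" "L (z i) < L (\<beta> i * (\<tau> - \<eta>) + e i)"
      using \<delta>_le unfolding dist_real_def abs_less_iff by linarith+
    then have "z i < \<beta> i * (\<tau> + \<eta>) + e i" "\<beta> i * (\<tau> - \<eta>) + e i < z i"
      using elim(4,6) monotone_onD[OF L] by (auto simp: not_less[symmetric])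
    then have "\<tau> - \<eta> < (z i - e i) / \<beta> i" "(z i - e i) / \<beta> i < \<tau> + \<eta>"
      using elim(5) by (simp_all add: field_simps)
    then show ?case
      using \<open>\<eta> \<le> \<epsilon>\<close> unfolding dist_real_def abs_less_iff by linarith
  qed
qed

lemma ln_potter_bound:
  fixes f :: "real \<Rightarrow> real"
  assumes f: "antimono_on {0<..} f"
    and half: "((\<lambda>w. f (w / 2) - f w) \<longlongrightarrow> ln 2) (at_right 0)"
  obtains w0 where "0 < w0"
    and "\<And>w t. 0 < w \<Longrightarrow> w \<le> w0 \<Longrightarrow> 0 < t \<Longrightarrow> t \<le> 1 \<Longrightarrow> f (t * w) - f w \<le> 1 + 2 * (- ln t)"
proof -
  have "\<forall>\<^sub>F w in at_right 0. f (w / 2) - f w < 1"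
    using ln_2_less_1 by (intro order_tendstoD(2)[OF half])
  then obtain w0 where w0: "0 < w0" and step: "\<And>w. 0 < w \<Longrightarrow> w < w0 \<Longrightarrow> f (w / 2) \<le> f w + 1"
    unfolding eventually_at_right_field by force
  have halving: "f ((1 / 2) ^ n * w) \<le> f w + n" if "0 < w" "w < w0" for n w
  proof (induction n)
    case (Suc n)
    have "(1 / 2) ^ n * w \<le> w"
      using \<open>0 < w\<close> by (simp add: power_le_one mult_left_le_one_le)
    then have "f ((1 / 2) ^ n * w / 2) \<le> f ((1 / 2) ^ n * w) + 1"
      using that by (intro step) (simp, linarith)
    with Suc.IH show ?case
      by (simp add: mult.assoc)
  qed simp
  show thesis
  proof (rule that[of "w0 / 2"])
    fix w t :: real
    assume w: "0 < w" "w \<le> w0 / 2" and t: "0 < t" "t \<le> 1"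
    define m where "m = (LEAST m. (1 / 2 :: real) ^ m < t)"
    have m: "(1 / 2 :: real) ^ m < t"
      unfolding m_def by (rule LeastI_ex) (use t real_arch_pow_inv[of t "1 / 2"] in auto)
    then obtain k where k: "m = Suc k"
      using t by (cases m) auto
    have "\<not> (1 / 2 :: real) ^ k < t"
      unfolding m_def by (rule not_less_Least) (simp add: k m_def[symmetric])
    then have "ln t \<le> ln ((1 / 2 :: real) ^ k)"
      using t by simp
    then have "real k * (2 / 3) \<le> - ln t"
      using ln2_ge_two_thirds mult_left_mono[OF ln2_ge_two_thirds, of "real k"]
      by (simp add: ln_realpow ln_div)
    moreover have "f (t * w) \<le> f ((1 / 2) ^ m * w)"
      using m w t by (intro monotone_onD[OF f]) auto
    moreover have "f ((1 / 2) ^ m * w) \<le> f w + m"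
      using halving w w0 by simp
    ultimately show "f (t * w) - f w \<le> 1 + 2 * (- ln t)"
      using k by simp
  qed (use w0 in simp)
qed

section \<open>The tail of a Levy measure\<close>

lemma Pibar_nonneg: "0 \<le> Pibar M x"
  by (simp add: Pibar_def)

locale levy_tail =
  fixes M :: "real measure"
  assumes levy: "subordinator_levy_measure M"
    and infinite: "infinite_measure M"
    and atomless_M: "atomless M"
begin

lemma sets_M [measurable_cong]: "sets M = sets borel"
  using levy by (simp add: subordinator_levy_measure_def)

lemma space_M [simp]: "space M = UNIV"
  using sets_eq_imp_space_eq[OF sets_M] by simp

lemma emeasure_Ioi_finite:
  assumes "0 < x"
  shows "emeasure M {x<..} < \<infinity>"
proof -
  have "ennreal (min 1 x) * emeasure M {x<..} = (\<integral>\<^sup>+ u. ennreal (min 1 x) * indicator {x<..} u \<partial>M)"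
    by (simp add: nn_integral_cmult_indicator)
  also have "\<dots> \<le> (\<integral>\<^sup>+ u. ennreal (min 1 u) \<partial>M)"
    by (intro nn_integral_mono) (auto simp: indicator_def intro: ennreal_leI)
  also have "\<dots> < \<infinity>"
    using levy by (simp add: subordinator_levy_measure_def)
  finally show ?thesis
    using assms by (auto simp: ennreal_mult_less_top min_def split: if_splits)
qed

lemma emeasure_Ioi_eq_Pibar:
  assumes "0 < x"
  shows "emeasure M {x<..} = ennreal (Pibar M x)"
  using emeasure_Ioi_finite[OF assms] by (simp add: Pibar_def measure_def ennreal_enn2real less_top)

lemma Pibar_antimono:
  assumes "0 < x" "x \<le> y"
  shows "Pibar M y \<le> Pibar M x"
proof -
  have "emeasure M {y<..} \<le> emeasure M {x<..}"
    using assms by (intro emeasure_mono) auto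
  then show ?thesis
    using assms emeasure_Ioi_eq_Pibar[of x] emeasure_Ioi_eq_Pibar[of y] by (simp add: ennreal_le_iff Pibar_nonneg)
qed

text \<open>For \<open>x \<le> 0\<close> the set \<open>{x<..}\<close> has infinite measure, and \<^const>\<open>measure\<close> returns 0 there.\<close>

lemma Pibar_nonpos:
  assumes "x \<le> 0"
  shows "Pibar M x = 0"
proof -
  have "emeasure M {0<..} \<le> emeasure M {x<..}"
    using assms by (intro emeasure_mono) auto
  then have "emeasure M {x<..} = \<infinity>"
    using infinite by (simp add: infinite_measure_def top_unique)
  then show ?thesis
    by (simp add: Pibar_def measure_def)
qed

lemma borel_measurable_Pibar [measurable]: "Pibar M \<in> borel_measurable borel"
proof -
  have "(\<lambda>x. - Pibar M x) \<in> borel_measurable borel"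
    by (rule borel_measurable_piecewise_mono[of "{{..0}, {0<..}}"])
      (auto simp: mono_on_def Pibar_nonpos intro: Pibar_antimono)
  then show ?thesis
    by simp
qed

lemma filterlim_Pibar_at_right_0: "filterlim (Pibar M) at_top (at_right 0)"
  unfolding filterlim_at_top
proof
  fix Z :: real
  have "incseq (\<lambda>n. {1 / real (Suc n)<..})"
    by (auto simp: incseq_def frac_le intro: le_less_trans[rotated])
  moreover have "(\<Union>n. {1 / real (Suc n)<..}) = {0::real<..}"
  proof safe
    fix x :: real
    assume "0 < x"
    then obtain n where "1 / real (Suc n) < x"
      by (rule nat_approx_posE)
    then show "x \<in> (\<Union>n. {1 / real (Suc n)<..})"
      by blast
  next
    fix x :: real and n
    assume "1 / real (Suc n) < x"
    then show "0 < x"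
      by (rule less_trans[rotated]) simp
  qed
  ultimately have sup: "(SUP n. emeasure M {1 / real (Suc n)<..}) = \<infinity>"
    using SUP_emeasure_incseq[of "\<lambda>n. {1 / real (Suc n)<..}" M] infinite
    by (simp add: infinite_measure_def image_subset_iff)
  have "ennreal Z < (SUP n. emeasure M {1 / real (Suc n)<..})"
    unfolding sup by simp
  then obtain n where "ennreal Z < emeasure M {1 / real (Suc n)<..}"
    by (auto simp: less_SUP_iff)
  then have "ennreal Z < ennreal (Pibar M (1 / real (Suc n)))"
    by (simp add: emeasure_Ioi_eq_Pibar)
  then have "Z \<le> Pibar M (1 / real (Suc n))"
    using Pibar_nonneg[of M "1 / real (Suc n)"] by (cases "Z \<le> 0") (auto simp: ennreal_less_iff)
  then show "\<forall>\<^sub>F x in at_right 0. Z \<le> Pibar M x"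
    unfolding eventually_at_right_field
    by (intro exI[of _ "1 / real (Suc n)"]) (auto dest: Pibar_antimono[of _ "1 / real (Suc n)"])
qed

lemma Pibar_le_from_right:
  assumes x: "0 < x" and right: "\<And>e. 0 < e \<Longrightarrow> Pibar M (x + e) \<le> r"
  shows "Pibar M x \<le> r"
proof -
  have "incseq (\<lambda>n. {x + 1 / real (Suc n)<..})"
    by (auto simp: incseq_def frac_le intro: le_less_trans[rotated])
  moreover have "(\<Union>n. {x + 1 / real (Suc n)<..}) = {x<..}"
  proof safe
    fix y
    assume "x < y"
    then have "0 < y - x"
      by simp
    then obtain n where "1 / real (Suc n) < y - x"
      by (rule nat_approx_posE)
    then show "y \<in> (\<Union>n. {x + 1 / real (Suc n)<..})"
      by (intro UN_I[of n]) auto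
  next
    fix y n
    assume "x + 1 / real (Suc n) < y"
    then show "x < y"
      by (rule le_less_trans[rotated]) simp
  qed
  ultimately have "emeasure M {x<..} = (SUP n. emeasure M {x + 1 / real (Suc n)<..})"
    using SUP_emeasure_incseq[of "\<lambda>n. {x + 1 / real (Suc n)<..}" M] by (simp add: image_subset_iff)
  also have "\<dots> \<le> ennreal r"
  proof (rule SUP_least)
    fix n
    have "0 < x + 1 / real (Suc n)"
      using x by (simp add: add_pos_pos)
    then show "emeasure M {x + 1 / real (Suc n)<..} \<le> ennreal r"
      using right[of "1 / real (Suc n)"] by (simp add: emeasure_Ioi_eq_Pibar ennreal_leI)
  qed
  finally have "ennreal (Pibar M x) \<le> ennreal r"
    using x by (simp add: emeasure_Ioi_eq_Pibar)
  moreover have "0 \<le> r"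
    using right[of 1] Pibar_nonneg[of M "x + 1"] by simp
  ultimately show ?thesis
    by (simp add: ennreal_le_iff)
qed

lemma Pibar_ge_from_left:
  assumes x: "0 < x" and left: "\<And>y. 0 < y \<Longrightarrow> y < x \<Longrightarrow> r \<le> Pibar M y"
  shows "r \<le> Pibar M x"
proof -
  define X where "X n = x - x / real (n + 2)" for n
  have X: "0 < X n" "X n < x" for n
  proof -
    have "0 < x / real (n + 2)" "x / real (n + 2) < x"
      using x by (simp_all add: divide_less_eq)
    then show "0 < X n" "X n < x"
      by (simp_all add: X_def)
  qed
  have "(INF n. emeasure M {X n<..}) = emeasure M {x..}"
    using INF_emeasure_decseq[of "\<lambda>n. {X n<..}" M] emeasure_Ioi_finite X
      decseq_Ioi_approx[OF x] INT_Ioi_approx[OF x]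
    by (simp add: X_def image_subset_iff less_top)
  also have "{x..} = insert x {x<..}"
    by auto
  also have "emeasure M (insert x {x<..}) = emeasure M {x<..}"
    using atomless_M by (subst emeasure_insert) (auto simp: atomless_def)
  finally have "(INF n. emeasure M {X n<..}) = ennreal (Pibar M x)"
    using x by (simp add: emeasure_Ioi_eq_Pibar)
  moreover have "ennreal r \<le> (INF n. emeasure M {X n<..})"
    using left X by (intro INF_greatest) (simp add: emeasure_Ioi_eq_Pibar ennreal_leI)
  ultimately show ?thesis
    by (simp add: ennreal_le_iff Pibar_nonneg)
qed

lemma Pibar_Pibar_inv:
  assumes r: "Pibar M 1 \<le> r"
  shows "0 < Pibar_inv M r" "Pibar M (Pibar_inv M r) = r"
proof -
  define T where "T = {x. 0 < x \<and> Pibar M x \<le> r}"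
  have inv: "Pibar_inv M r = Inf T"
    by (simp add: Pibar_inv_def T_def)
  have "1 \<in> T"
    using r by (simp add: T_def)
  have "\<forall>\<^sub>F x in at_right 0. r + 1 \<le> Pibar M x"
    using filterlim_Pibar_at_right_0 by (simp add: filterlim_at_top)
  then obtain c where c: "0 < c" "\<And>y. 0 < y \<Longrightarrow> y < c \<Longrightarrow> r + 1 \<le> Pibar M y"
    unfolding eventually_at_right_field by auto
  have "c \<le> Inf T"
    using \<open>1 \<in> T\<close> c by (intro cInf_greatest) (force simp: T_def)+
  then show pos: "0 < Pibar_inv M r"
    using c inv by simp
  have "bdd_below T"
    by (auto simp: T_def bdd_below_def intro!: exI[of _ 0])
  show "Pibar M (Pibar_inv M r) = r"
  proof (rule antisym)
    show "Pibar M (Pibar_inv M r) \<le> r"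
    proof (rule Pibar_le_from_right[OF pos])
      fix e :: real
      assume "0 < e"
      then obtain x where "x \<in> T" "x < Pibar_inv M r + e"
        using cInf_lessD[of T "Inf T + e"] \<open>1 \<in> T\<close> inv by fastforce
      then show "Pibar M (Pibar_inv M r + e) \<le> r"
        using Pibar_antimono[of x "Pibar_inv M r + e"] by (auto simp: T_def)
    qed
    show "r \<le> Pibar M (Pibar_inv M r)"
    proof (rule Pibar_ge_from_left[OF pos])
      fix y
      assume "0 < y" "y < Pibar_inv M r"
      then have "y \<notin> T"
        using cInf_lower[OF _ \<open>bdd_below T\<close>] inv by force
      then show "r \<le> Pibar M y"
        using \<open>0 < y\<close> by (simp add: T_def)
    qed
  qed
qed

lemma filterlim_Pibar_inv_at_top: "filterlim (Pibar_inv M) (at_right 0) at_top"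
  unfolding filterlim_at
proof
  show "\<forall>\<^sub>F r in at_top. Pibar_inv M r \<in> {0<..} \<and> Pibar_inv M r \<noteq> 0"
    using eventually_ge_at_top[of "Pibar M 1"]
  proof eventually_elim
    case (elim r)
    with Pibar_Pibar_inv(1)[OF elim] show ?case
      by simp
  qed
  show "(Pibar_inv M \<longlongrightarrow> 0) at_top"
  proof (rule tendstoI)
    fix e :: real
    assume e: "0 < e"
    show "\<forall>\<^sub>F r in at_top. dist (Pibar_inv M r) 0 < e"
      using eventually_ge_at_top[of "max (Pibar M 1) (Pibar M (e / 2))"]
    proof eventually_elim
      case (elim r)
      have "Pibar_inv M r \<le> e / 2"
        unfolding Pibar_inv_def using elim e by (intro cInf_lower) (auto simp: bdd_below_def intro!: exI[of _ 0])
      with Pibar_Pibar_inv(1)[of r] elim e show ?case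
        by simp
    qed
  qed
qed

lemma emeasure_Icc_eq_Pibar_diff:
  assumes "0 < v" "v \<le> w"
  shows "emeasure M {v..w} = ennreal (Pibar M v - Pibar M w)"
proof -
  have "emeasure M {v..w} + emeasure M {w<..} = emeasure M ({v..w} \<union> {w<..})"
    by (intro plus_emeasure) auto
  also have "{v..w} \<union> {w<..} = insert v {v<..}"
    using assms by auto
  also have "emeasure M (insert v {v<..}) = emeasure M {v<..}"
    using atomless_M by (subst emeasure_insert) (auto simp: atomless_def)
  finally have sum: "emeasure M {v..w} + ennreal (Pibar M w) = ennreal (Pibar M v)"
    using assms by (simp add: emeasure_Ioi_eq_Pibar)
  have "emeasure M {v..w} = emeasure M {v..w} + ennreal (Pibar M w) - ennreal (Pibar M w)"
    by (simp add: ennreal_add_diff_cancel_right)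
  also have "\<dots> = ennreal (Pibar M v - Pibar M w)"
    by (simp add: sum ennreal_minus Pibar_nonneg)
  finally show ?thesis .
qed

lemma nn_integral_indicator_Icc:
  assumes "0 < v" "v \<le> w" "0 \<le> c"
  shows "(\<integral>\<^sup>+ u. ennreal c * indicator {v..w} u \<partial>M) = ennreal (c * (Pibar M v - Pibar M w))"
  using assms Pibar_antimono[of v w]
  by (simp add: nn_integral_cmult_indicator emeasure_Icc_eq_Pibar_diff ennreal_mult)

lemma sigma_finite_M: "sigma_finite_measure M"
proof
  let ?A = "insert {..0} (range (\<lambda>n. {1 / real (Suc n)<..}))"
  have cover: "x \<in> \<Union>?A" for x :: real
  proof (cases "x \<le> 0")
    case False
    then have "0 < x"
      by simp
    then obtain n where "1 / real (Suc n) < x"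
      by (rule nat_approx_posE)
    then show ?thesis
      by auto
  qed auto
  show "\<exists>A. countable A \<and> A \<subseteq> sets M \<and> \<Union>A = space M \<and> (\<forall>a\<in>A. emeasure M a \<noteq> \<infinity>)"
  proof (intro exI[of _ ?A] conjI)
    show "\<forall>a\<in>?A. emeasure M a \<noteq> \<infinity>"
      using levy emeasure_Ioi_finite by (auto simp: subordinator_levy_measure_def less_top)
  qed (use cover in auto)
qed

lemma nn_integral_powr_eq_tail:
  assumes w: "0 < w" and p: "0 < p"
  shows "(\<integral>\<^sup>+ u. ennreal (indicator {0..w} u * u powr p) \<partial>M) =
         (\<integral>\<^sup>+ v. ennreal (indicator {0..w} v * (p * v powr (p - 1) * (Pibar M v - Pibar M w))) \<partial>lborel)"
proof -
  interpret pair_sigma_finite M lborel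
    by (intro pair_sigma_finite.intro sigma_finite_M sigma_finite_lborel)
  define F where "F u v = (if 0 \<le> v \<and> v \<le> u \<and> u \<le> w then ennreal (p * v powr (p - 1)) else 0)"
    for u v :: real
  have "(\<lambda>(u, v). F u v) \<in> borel_measurable (borel \<Otimes>\<^sub>M borel)"
    unfolding F_def by measurable
  then have F_meas: "(\<lambda>(u, v). F u v) \<in> borel_measurable (M \<Otimes>\<^sub>M lborel)"
    using measurable_cong_sets[OF sets_pair_measure_cong[OF sets_M sets_lborel] refl] by simp
  have inner_lborel: "ennreal (indicator {0..w} u * u powr p) = (\<integral>\<^sup>+ v. F u v \<partial>lborel)" for u
  proof (cases "0 \<le> u \<and> u \<le> w")
    case True
    then have "(\<integral>\<^sup>+ v. F u v \<partial>lborel) = (\<integral>\<^sup>+ v. ennreal (p * v powr (p - 1)) * indicator {0..u} v \<partial>lborel)"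
      by (intro nn_integral_cong) (auto simp: F_def indicator_def)
    also have "\<dots> = ennreal (u powr p)"
      using True p by (intro nn_integral_powr_derivative) auto
    finally show ?thesis
      using True by simp
  next
    case False
    then have "F u v = 0" for v
      by (auto simp: F_def)
    with False show ?thesis
      by (auto simp: indicator_def)
  qed
  have inner_M: "(\<integral>\<^sup>+ u. F u v \<partial>M) =
      ennreal (indicator {0..w} v * (p * v powr (p - 1) * (Pibar M v - Pibar M w)))" for v
  proof (cases "0 < v \<and> v \<le> w")
    case True
    then have "(\<integral>\<^sup>+ u. F u v \<partial>M) = (\<integral>\<^sup>+ u. ennreal (p * v powr (p - 1)) * indicator {v..w} u \<partial>M)"
      by (intro nn_integral_cong) (auto simp: F_def indicator_def)
    also have "\<dots> = ennreal (p * v powr (p - 1) * (Pibar M v - Pibar M w))"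
      using True p by (intro nn_integral_indicator_Icc) auto
    finally show ?thesis
      using True by simp
  next
    case False
    then have "F u v = 0" for u
      by (auto simp: F_def)
    with False show ?thesis
      by (auto simp: indicator_def)
  qed
  have "(\<integral>\<^sup>+ u. ennreal (indicator {0..w} u * u powr p) \<partial>M) = (\<integral>\<^sup>+ u. (\<integral>\<^sup>+ v. F u v \<partial>lborel) \<partial>M)"
    by (simp add: inner_lborel)
  also have "\<dots> = (\<integral>\<^sup>+ v. (\<integral>\<^sup>+ u. F u v \<partial>M) \<partial>lborel)"
    by (rule Fubini'[OF F_meas, symmetric])
  finally show ?thesis
    by (simp add: inner_M)
qed

definition tail_kernel :: "real \<Rightarrow> real \<Rightarrow> real \<Rightarrow> real"
  where "tail_kernel p w t = indicator {0..1} t * (p * t powr (p - 1) * (Pibar M (w * t) - Pibar M w))"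

lemma borel_measurable_tail_kernel [measurable]: "tail_kernel p w \<in> borel_measurable borel"
  unfolding tail_kernel_def by measurable

lemma tail_kernel_nonneg:
  assumes "0 < w" "0 < p"
  shows "0 \<le> tail_kernel p w t"
proof (cases "0 < t \<and> t \<le> 1")
  case True
  then have "Pibar M w \<le> Pibar M (w * t)"
    using assms by (intro Pibar_antimono) (auto simp: mult_le_cancel_left1)
  with True assms show ?thesis
    by (simp add: tail_kernel_def)
qed (auto simp: tail_kernel_def indicator_def)

lemma nn_integral_tail_rescale:
  assumes w: "0 < w" and p: "0 < p"
  shows "(\<integral>\<^sup>+ v. ennreal (indicator {0..w} v * (p * v powr (p - 1) * (Pibar M v - Pibar M w))) \<partial>lborel) =
         ennreal (w powr p) * (\<integral>\<^sup>+ t. ennreal (tail_kernel p w t) \<partial>lborel)"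
proof -
  have rescale: "ennreal (indicator {0..w} (w * t) * (p * (w * t) powr (p - 1) * (Pibar M (w * t) - Pibar M w)))
      = ennreal (w powr (p - 1)) * ennreal (tail_kernel p w t)" for t
  proof (cases "0 \<le> t \<and> t \<le> 1")
    case True
    then have "indicator {0..w} (w * t) * (p * (w * t) powr (p - 1) * (Pibar M (w * t) - Pibar M w))
        = w powr (p - 1) * tail_kernel p w t"
      using w by (simp add: tail_kernel_def indicator_def powr_mult mult_le_cancel_left1)
    then show ?thesis
      using tail_kernel_nonneg[OF w p] by (simp add: ennreal_mult)
  next
    case False
    then have "indicator {0..w} (w * t) = (0::real)"
      using w by (auto simp: indicator_def zero_le_mult_iff mult_le_cancel_left1)
    with False show ?thesis
      by (simp add: tail_kernel_def)
  qed
  have "(\<integral>\<^sup>+ v. ennreal (indicator {0..w} v * (p * v powr (p - 1) * (Pibar M v - Pibar M w))) \<partial>lborel)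
      = \<bar>w\<bar> * (\<integral>\<^sup>+ t. ennreal (indicator {0..w} (0 + w * t) *
          (p * (0 + w * t) powr (p - 1) * (Pibar M (0 + w * t) - Pibar M w))) \<partial>lborel)"
    using w by (intro nn_integral_real_affine) auto
  also have "\<dots> = ennreal w * (\<integral>\<^sup>+ t. ennreal (w powr (p - 1)) * ennreal (tail_kernel p w t) \<partial>lborel)"
    using w by (simp only: add_0_left rescale abs_of_pos)
  also have "\<dots> = ennreal (w * w powr (p - 1)) * (\<integral>\<^sup>+ t. ennreal (tail_kernel p w t) \<partial>lborel)"
    using w by (simp add: nn_integral_cmult ennreal_mult mult.assoc)
  also have "w * w powr (p - 1) = w powr p"
    using w by (simp add: powr_mult_base)
  finally show ?thesis .
qed

lemma set_integral_powr_eq_tail_kernel: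
  assumes w: "0 < w" and p: "0 < p"
  shows "(LINT u:{0..w}|M. u powr p) = w powr p * (LINT t|lborel. tail_kernel p w t)"
proof -
  have "(LINT u:{0..w}|M. u powr p) = (\<integral> u. indicator {0..w} u * u powr p \<partial>M)"
    by (simp add: set_lebesgue_integral_def)
  also have "\<dots> = enn2real (\<integral>\<^sup>+ u. ennreal (indicator {0..w} u * u powr p) \<partial>M)"
    by (intro integral_eq_nn_integral) auto
  also have "\<dots> = w powr p * enn2real (\<integral>\<^sup>+ t. ennreal (tail_kernel p w t) \<partial>lborel)"
    using nn_integral_powr_eq_tail[OF w p] nn_integral_tail_rescale[OF w p] by (simp add: enn2real_mult)
  also have "enn2real (\<integral>\<^sup>+ t. ennreal (tail_kernel p w t) \<partial>lborel) = (LINT t|lborel. tail_kernel p w t)"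
    using tail_kernel_nonneg[OF w p] by (intro integral_eq_nn_integral[symmetric]) auto
  finally show ?thesis .
qed

end

section \<open>Square-root scaling of the tail\<close>

locale sqrt_tail_scaling = levy_tail +
  fixes a b :: "real \<Rightarrow> real" and \<gamma> :: real
  assumes a_pos: "\<And>r. a r > 0"
    and \<gamma>_neg: "\<gamma> < 0"
    and conv: "\<And>x. 1 - \<gamma> * x > 0 \<Longrightarrow>
        (\<forall>\<^sub>F r in at_top. a r * x + b r > 0) \<and>
        ((\<lambda>r. (r - Pibar M (a r * x + b r)) / sqrt r)
           \<longlongrightarrow> - (2 / \<gamma>) * ln (1 - \<gamma> * x)) at_top"
begin

definition g :: real
  where "g = - \<gamma>"

lemma g_pos: "0 < g"
  using \<gamma>_neg by (simp add: g_def)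

lemma abs_\<gamma>: "\<bar>\<gamma>\<bar> = g"
  using \<gamma>_neg by (simp add: g_def)

definition L :: "real \<Rightarrow> real"
  where "L y = g * sqrt (Pibar M y)"

definition \<rho> :: "real \<Rightarrow> real"
  where "\<rho> r = g * sqrt r"

definition A :: "real \<Rightarrow> real"
  where "A r = a r / g"

definition d :: "real \<Rightarrow> real"
  where "d r = b r - A r"

lemma A_pos: "0 < A r"
  using a_pos g_pos by (simp add: A_def)

lemma L_antimono: "antimono_on {0<..} L"
  using g_pos by (auto intro!: monotone_onI simp: L_def Pibar_antimono)

lemma \<rho>_Pibar: "\<rho> (Pibar M y) = L y"
  by (simp add: \<rho>_def L_def)

lemma filterlim_L_at_right_0: "filterlim L at_top (at_right 0)"
  unfolding L_def[abs_def]
  by (rule filterlim_tendsto_pos_mult_at_top[OF tendsto_const g_pos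
        filterlim_compose[OF sqrt_at_top filterlim_Pibar_at_right_0]])

text \<open>The substitution \<open>x = (\<sigma> - 1) / |\<gamma>|\<close> turns \<open>1 - \<gamma> x\<close> into \<open>\<sigma>\<close> and \<open>a r x + b r\<close>
  into \<open>A r \<sigma> + d r\<close>; \<open>sqrt \<Pi> - sqrt r = - ((r - \<Pi>) / sqrt r) / (sqrt (\<Pi> / r) + 1)\<close> then
  converts the hypothesis.\<close>

lemma ln_scaling_affine: "ln_scaling L A d \<rho> at_top"
proof (rule ln_scalingI)
  fix \<sigma> :: real
  assume \<sigma>: "0 < \<sigma>"
  define x where "x = (\<sigma> - 1) / g"
  have x: "1 - \<gamma> * x = \<sigma>" "a r * x + b r = A r * \<sigma> + d r" for r
    using g_pos by (simp_all add: x_def A_def d_def g_def field_simps)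
  note conv_x = conv[of x, unfolded x]
  then show "\<forall>\<^sub>F r in at_top. 0 < A r * \<sigma> + d r"
    using \<sigma> by simp
  define z where "z r = (r - Pibar M (A r * \<sigma> + d r)) / sqrt r" for r
  have z: "(z \<longlongrightarrow> 2 / g * ln \<sigma>) at_top"
    using conv_x \<sigma> unfolding z_def by (simp add: g_def)
  have "((\<lambda>r. 1 - z r * inverse (sqrt r)) \<longlongrightarrow> 1 - 2 / g * ln \<sigma> * 0) at_top"
    by (intro tendsto_intros z tendsto_inverse_0_at_top[OF sqrt_at_top])
  then have "((\<lambda>r. - g * z r / (sqrt (1 - z r * inverse (sqrt r)) + 1)) \<longlongrightarrow>
      - g * (2 / g * ln \<sigma>) / (sqrt 1 + 1)) at_top"
    by (intro tendsto_intros z) auto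
  moreover have "\<forall>\<^sub>F r in at_top. - g * z r / (sqrt (1 - z r * inverse (sqrt r)) + 1) =
      L (A r * \<sigma> + d r) - \<rho> r"
    using eventually_gt_at_top[of 0]
  proof eventually_elim
    case (elim r)
    have "1 - z r * inverse (sqrt r) = Pibar M (A r * \<sigma> + d r) / r"
      using elim by (simp add: z_def field_simps)
    then show ?case
      using elim sqrt_diff_eq[OF elim Pibar_nonneg, of M "A r * \<sigma> + d r"]
      by (simp add: L_def \<rho>_def z_def right_diff_distrib[symmetric])
  qed
  ultimately show "((\<lambda>r. L (A r * \<sigma> + d r) - \<rho> r) \<longlongrightarrow> - ln \<sigma>) at_top"
    using g_pos by (simp add: tendsto_cong)
qed

text \<open>At \<open>A r + d r\<close> and \<open>2 A r + d r\<close> the value of \<open>L\<close> grows like \<open>\<rho> r\<close>, so both points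
  tend to 0, and with them \<open>d r\<close>.\<close>

lemma d_tendsto_0: "(d \<longlongrightarrow> 0) at_top"
proof (rule tendstoI)
  fix \<epsilon> :: real
  assume \<epsilon>: "0 < \<epsilon>"
  have one: "(1::real) > 0" and two: "(2::real) > 0"
    by simp_all
  have "\<forall>\<^sub>F r in at_top. \<rho> r > L (\<epsilon> / 2) + 3"
    using filterlim_tendsto_pos_mult_at_top[OF tendsto_const g_pos sqrt_at_top]
    by (simp add: \<rho>_def filterlim_at_top_dense)
  moreover have "\<forall>\<^sub>F r in at_top. - 1 < L (A r * 1 + d r) - \<rho> r"
    using order_tendstoD(1)[OF ln_scalingD(2)[OF ln_scaling_affine one]] by simp
  moreover have "\<forall>\<^sub>F r in at_top. - ln 2 - 1 < L (A r * 2 + d r) - \<rho> r"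
    using order_tendstoD(1)[OF ln_scalingD(2)[OF ln_scaling_affine two]] by simp
  ultimately show "\<forall>\<^sub>F r in at_top. dist (d r) 0 < \<epsilon>"
    using ln_scalingD(1)[OF ln_scaling_affine one] ln_scalingD(1)[OF ln_scaling_affine two]
  proof eventually_elim
    case (elim r)
    have below: "A r * \<sigma> + d r < \<epsilon> / 2" if "\<sigma> \<in> {1, 2}" for \<sigma>
    proof (rule ccontr)
      assume "\<not> ?thesis"
      then have "L (A r * \<sigma> + d r) \<le> L (\<epsilon> / 2)"
        using \<epsilon> by (intro monotone_onD[OF L_antimono]) auto
      with elim that ln_2_less_1 show False
        by auto
    qed
    then show ?case
      using below[of 1] below[of 2] elim(4) A_pos[of r] by (simp add: dist_real_def abs_less_iff)
  qed
qed

definition \<phi> :: "real \<Rightarrow> real"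
  where "\<phi> r = (sqrt r + 1 / g)\<^sup>2"

lemma \<phi>_ge: "0 \<le> r \<Longrightarrow> r + 1 / g\<^sup>2 \<le> \<phi> r"
  using g_pos by (simp add: \<phi>_def power2_eq_square algebra_simps)

lemma \<rho>_\<phi>: "0 \<le> r \<Longrightarrow> \<rho> (\<phi> r) = \<rho> r + 1"
  using g_pos by (simp add: \<phi>_def \<rho>_def distrib_left)

lemma filterlim_\<phi>: "filterlim \<phi> at_top at_top"
proof (rule filterlim_at_top_mono[OF filterlim_ident])
  show "\<forall>\<^sub>F r in at_top. r \<le> \<phi> r"
    using eventually_ge_at_top[of 0]
  proof eventually_elim
    case (elim r)
    have "0 \<le> 1 / g\<^sup>2"
      by simp
    with \<phi>_ge[OF elim] show ?case
      by linarith
  qed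
qed

text \<open>Because \<open>\<rho> (\<phi> r) = \<rho> r + 1\<close>, passing from \<open>r\<close> to \<open>\<phi> r\<close> lowers the limit \<open>- ln \<sigma>\<close> by one;
  this is where the factor \<open>exp (- 1)\<close> comes from.\<close>

lemma affine_\<phi>_limit:
  assumes t: "0 < t"
  shows "((\<lambda>r. (A (\<phi> r) * t + d (\<phi> r) - d r) / A r) \<longlongrightarrow> t * exp (- 1)) at_top"
proof (rule ln_scaling_tendsto_inverse[OF L_antimono ln_scaling_affine])
  show "\<forall>\<^sub>F r in at_top. 0 < A r" "0 < t * exp (- 1)"
    using A_pos t by simp_all
  show "\<forall>\<^sub>F r in at_top. 0 < A (\<phi> r) * t + d (\<phi> r)"
    by (rule filterlim_iff[THEN iffD1, OF filterlim_\<phi>, rule_format, OF ln_scalingD(1)[OF ln_scaling_affine t]])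
  have "((\<lambda>r. L (A (\<phi> r) * t + d (\<phi> r)) - \<rho> (\<phi> r) + 1) \<longlongrightarrow> - ln t + 1) at_top"
    by (intro tendsto_intros filterlim_compose[OF ln_scalingD(2)[OF ln_scaling_affine t] filterlim_\<phi>])
  moreover have "\<forall>\<^sub>F r in at_top. L (A (\<phi> r) * t + d (\<phi> r)) - \<rho> (\<phi> r) + 1 = L (A (\<phi> r) * t + d (\<phi> r)) - \<rho> r"
    using eventually_ge_at_top[of 0] by eventually_elim (simp add: \<rho>_\<phi>)
  ultimately show "((\<lambda>r. L (A (\<phi> r) * t + d (\<phi> r)) - \<rho> r) \<longlongrightarrow> - ln (t * exp (- 1))) at_top"
    using t by (simp add: ln_mult tendsto_cong)
qed

lemma A_\<phi>_ratio: "((\<lambda>r. A (\<phi> r) / A r) \<longlongrightarrow> exp (- 1)) at_top"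
proof -
  have "((\<lambda>r. (A (\<phi> r) * 2 + d (\<phi> r) - d r) / A r - (A (\<phi> r) * 1 + d (\<phi> r) - d r) / A r)
      \<longlongrightarrow> 2 * exp (- 1) - 1 * exp (- 1)) at_top"
    by (intro tendsto_diff affine_\<phi>_limit) auto
  then show ?thesis
    using A_pos by (simp add: diff_divide_distrib[symmetric] algebra_simps)
qed

lemma d_\<phi>_increment: "((\<lambda>r. (d (\<phi> r) - d r) / A r) \<longlongrightarrow> 0) at_top"
proof -
  have "((\<lambda>r. (A (\<phi> r) * 1 + d (\<phi> r) - d r) / A r - A (\<phi> r) / A r) \<longlongrightarrow> 1 * exp (- 1) - exp (- 1)) at_top"
    by (intro tendsto_diff affine_\<phi>_limit A_\<phi>_ratio) auto
  then show ?thesis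
    using A_pos by (simp add: diff_divide_distrib[symmetric] algebra_simps)
qed

lemma d_over_A_tendsto_0: "((\<lambda>r. d r / A r) \<longlongrightarrow> 0) at_top"
  using g_pos exp_less_one_iff[of "- 1 :: real"]
  by (intro ratio_tendsto_0_by_iteration[OF A_pos d_tendsto_0 \<phi>_ge _ A_\<phi>_ratio _ d_\<phi>_increment]) auto

lemma ln_scaling_A: "ln_scaling L A (\<lambda>_. 0) \<rho> at_top"
proof (rule ln_scalingI)
  fix \<sigma> :: real
  assume \<sigma>: "0 < \<sigma>"
  then show "\<forall>\<^sub>F r in at_top. 0 < A r * \<sigma> + 0"
    using A_pos by simp
  have "((\<lambda>r. \<sigma> - d r / A r) \<longlongrightarrow> \<sigma> - 0) at_top"
    by (intro tendsto_intros d_over_A_tendsto_0)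
  moreover have "\<sigma> - d r / A r = (A r * \<sigma> - d r) / A r" for r
    using A_pos[of r] by (simp add: diff_divide_distrib)
  ultimately have "((\<lambda>r. (A r * \<sigma> - d r) / A r) \<longlongrightarrow> \<sigma>) at_top"
    by simp
  then show "((\<lambda>r. L (A r * \<sigma> + 0) - \<rho> r) \<longlongrightarrow> - ln \<sigma>) at_top"
    using A_pos \<sigma> by (simp add: ln_scaling_tendsto[OF L_antimono ln_scaling_affine])
qed

lemma ln_scaling_at_right_0: "ln_scaling L (\<lambda>y. A (Pibar M y)) (\<lambda>_. 0) L (at_right 0)"
proof (rule ln_scalingI)
  fix \<sigma> :: real
  assume \<sigma>: "0 < \<sigma>"
  then show "\<forall>\<^sub>F y in at_right 0. 0 < A (Pibar M y) * \<sigma> + 0"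
    using A_pos by simp
  show "((\<lambda>y. L (A (Pibar M y) * \<sigma> + 0) - L y) \<longlongrightarrow> - ln \<sigma>) (at_right 0)"
    using filterlim_compose[OF ln_scalingD(2)[OF ln_scaling_A \<sigma>] filterlim_Pibar_at_right_0]
    by (simp add: \<rho>_Pibar)
qed

lemma L_ratio_limit:
  assumes l: "0 < l"
  shows "((\<lambda>y. L (l * y) - L y) \<longlongrightarrow> - ln l) (at_right 0)"
proof (rule ln_scaling_tendsto[OF L_antimono ln_scaling_at_right_0])
  have "((\<lambda>y. (y - 0) / A (Pibar M y)) \<longlongrightarrow> 1) (at_right 0)"
    using A_pos by (intro ln_scaling_tendsto_inverse[OF L_antimono ln_scaling_at_right_0])
      (auto simp: eventually_at_right_less)
  then have "((\<lambda>y. l * ((y - 0) / A (Pibar M y))) \<longlongrightarrow> l * 1) (at_right 0)"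
    by (intro tendsto_intros)
  then show "((\<lambda>y. (l * y - 0) / A (Pibar M y)) \<longlongrightarrow> l) (at_right 0)"
    by simp
qed (use A_pos l in auto)

subsection \<open>Truncated moments\<close>

definition kernel_limit :: "real \<Rightarrow> real \<Rightarrow> real"
  where "kernel_limit p t = indicator {0..1} t * (p * t powr (p - 1) * (- ln t) / g)"

definition kernel_bound :: "real \<Rightarrow> real \<Rightarrow> real"
  where "kernel_bound p t = indicator {0..1} t * (p * (9 / g + (9 / g)\<^sup>2) * t powr (- 1 / 2))"

lemma eventually_Pibar_ge_1: "\<forall>\<^sub>F w in at_right 0. 0 < w \<and> 1 \<le> Pibar M w"
proof -
  have "\<forall>\<^sub>F w in at_right 0. 1 \<le> Pibar M w"
    using filterlim_Pibar_at_right_0 by (simp add: filterlim_at_top)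
  with eventually_at_right_less[of "0::real"] show ?thesis
    by eventually_elim simp
qed

lemma tail_kernel_normalized_eq:
  assumes t: "0 < t" "t \<le> 1" and w: "0 < Pibar M w"
  shows "tail_kernel p w t / (2 * sqrt (Pibar M w)) =
    p * t powr (p - 1) * ((L (t * w) - L w) / g + (L (t * w) - L w)\<^sup>2 * inverse (L w) / (2 * g))"
proof -
  define s1 where "s1 = sqrt (Pibar M (w * t))"
  define s0 where "s0 = sqrt (Pibar M w)"
  have "0 < s0"
    using w by (simp add: s0_def)
  have L: "L (t * w) = g * s1" "L w = g * s0"
    by (simp_all add: L_def s1_def s0_def mult.commute)
  have "Pibar M (w * t) = s1\<^sup>2" "Pibar M w = s0\<^sup>2"
    by (simp_all add: s1_def s0_def Pibar_nonneg)
  then have "tail_kernel p w t / (2 * sqrt (Pibar M w)) = p * t powr (p - 1) * ((s1\<^sup>2 - s0\<^sup>2) / (2 * s0))"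
    using t \<open>0 < s0\<close> by (simp add: tail_kernel_def s0_def[symmetric])
  also have "(s1\<^sup>2 - s0\<^sup>2) / (2 * s0) = (L (t * w) - L w) / g + (L (t * w) - L w)\<^sup>2 * inverse (L w) / (2 * g)"
    using L \<open>0 < s0\<close> g_pos by (simp add: field_simps power2_eq_square)
  finally show ?thesis .
qed

lemma tail_kernel_normalized_tendsto:
  "((\<lambda>w. tail_kernel p w t / (2 * sqrt (Pibar M w))) \<longlongrightarrow> kernel_limit p t) (at_right 0)"
proof (cases "0 < t \<and> t \<le> 1")
  case True
  have "((\<lambda>w. p * t powr (p - 1) * ((L (t * w) - L w) / g + (L (t * w) - L w)\<^sup>2 * inverse (L w) / (2 * g)))
      \<longlongrightarrow> p * t powr (p - 1) * ((- ln t) / g + (- ln t)\<^sup>2 * 0 / (2 * g))) (at_right 0)"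
    using True g_pos by (intro tendsto_intros L_ratio_limit tendsto_inverse_0_at_top[OF filterlim_L_at_right_0]) auto
  moreover have "\<forall>\<^sub>F w in at_right 0.
      p * t powr (p - 1) * ((L (t * w) - L w) / g + (L (t * w) - L w)\<^sup>2 * inverse (L w) / (2 * g))
        = tail_kernel p w t / (2 * sqrt (Pibar M w))"
    using eventually_Pibar_ge_1 by eventually_elim (use True in \<open>simp add: tail_kernel_normalized_eq\<close>)
  ultimately show ?thesis
    using True by (simp add: kernel_limit_def tendsto_cong)
next
  case False
  then have "tail_kernel p w t = 0" "kernel_limit p t = 0" for w
    by (auto simp: tail_kernel_def kernel_limit_def indicator_def)
  then show ?thesis
    by simp
qed

lemma tail_kernel_normalized_bound:
  assumes p: "1 \<le> p"
  obtains w0 where "0 < w0"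
    and "\<And>w t. 0 < w \<Longrightarrow> w \<le> w0 \<Longrightarrow> \<bar>tail_kernel p w t / (2 * sqrt (Pibar M w))\<bar> \<le> kernel_bound p t"
proof -
  have "((\<lambda>w. L (w / 2) - L w) \<longlongrightarrow> ln 2) (at_right 0)"
    using L_ratio_limit[of "1 / 2"] by (simp add: ln_div)
  then obtain w1 where w1: "0 < w1"
    and potter: "\<And>w t. 0 < w \<Longrightarrow> w \<le> w1 \<Longrightarrow> 0 < t \<Longrightarrow> t \<le> 1 \<Longrightarrow> L (t * w) - L w \<le> 1 + 2 * (- ln t)"
    using ln_potter_bound[OF L_antimono] by blast
  obtain w2 where w2: "0 < w2" "\<And>w. 0 < w \<Longrightarrow> w < w2 \<Longrightarrow> 1 \<le> Pibar M w"
    using eventually_Pibar_ge_1 unfolding eventually_at_right_field by auto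
  show thesis
  proof (rule that[of "min w1 (w2 / 2)"])
    fix w t :: real
    assume w: "0 < w" "w \<le> min w1 (w2 / 2)"
    show "\<bar>tail_kernel p w t / (2 * sqrt (Pibar M w))\<bar> \<le> kernel_bound p t"
    proof (cases "0 < t \<and> t \<le> 1")
      case True
      define D where "D = L (t * w) - L w"
      have Pw: "1 \<le> Pibar M w"
        using w w2 by simp
      then have "g \<le> L w"
        using g_pos by (simp add: L_def)
      moreover have "0 \<le> D"
        unfolding D_def using True w by (simp add: monotone_onD[OF L_antimono] mult_le_cancel_right1)
      moreover have "D \<le> 1 + 2 * (- ln t)"
        using potter[of w t] True w by (simp add: D_def)
      ultimately have bracket: "0 \<le> D / g + D\<^sup>2 * inverse (L w) / (2 * g)"
          "D / g + D\<^sup>2 * inverse (L w) / (2 * g) \<le> (9 / g + (9 / g)\<^sup>2) * t powr (- 1 / 2)"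
        using True g_pos quadratic_log_bound[of t g "L w" D] by simp_all
      have "0 \<le> t powr (p - 1)" "t powr (p - 1) \<le> 1"
        using True p by (auto intro: powr_le1)
      with bracket p have "p * t powr (p - 1) * (D / g + D\<^sup>2 * inverse (L w) / (2 * g))
          \<le> p * 1 * ((9 / g + (9 / g)\<^sup>2) * t powr (- 1 / 2))"
        by (intro mult_mono) auto
      with True w Pw p bracket \<open>0 \<le> t powr (p - 1)\<close> show ?thesis
        by (simp add: tail_kernel_normalized_eq D_def kernel_bound_def)
    qed (use g_pos p in \<open>auto simp: tail_kernel_def kernel_bound_def indicator_def\<close>)
  qed (use w1 w2 in simp)
qed

lemma integrable_kernel_bound:
  assumes "1 \<le> p"
  shows "integrable lborel (kernel_bound p)"
proof (rule integrableI_nonneg)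
  define C where "C = p * (9 / g + (9 / g)\<^sup>2)"
  have "0 \<le> C"
    using assms g_pos by (simp add: C_def)
  then show "AE t in lborel. 0 \<le> kernel_bound p t"
    by (simp add: kernel_bound_def C_def[symmetric])
  show "kernel_bound p \<in> borel_measurable lborel"
    unfolding kernel_bound_def by measurable
  have "((\<lambda>t. t powr (- 1 / 2)) has_integral (1 powr (- 1 / 2 + 1) / (- 1 / 2 + 1))) {0..1::real}"
    by (intro has_integral_powr_from_0) auto
  then have "((\<lambda>t. C * t powr (- 1 / 2)) has_integral C * 2) {0..1::real}"
    using has_integral_mult_right[of _ _ "{0..1::real}" C] by simp
  then have "(\<integral>\<^sup>+ t. ennreal (C * t powr (- 1 / 2)) * indicator {0..1} t \<partial>lborel) = ennreal (C * 2)"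
    using \<open>0 \<le> C\<close> by (intro nn_integral_has_integral_lebesgue') auto
  moreover have "(\<integral>\<^sup>+ t. ennreal (kernel_bound p t) \<partial>lborel) =
      (\<integral>\<^sup>+ t. ennreal (C * t powr (- 1 / 2)) * indicator {0..1} t \<partial>lborel)"
    by (intro nn_integral_cong) (simp add: kernel_bound_def C_def indicator_def)
  ultimately show "(\<integral>\<^sup>+ t. ennreal (kernel_bound p t) \<partial>lborel) < \<infinity>"
    by simp
qed

lemma integral_kernel_limit:
  assumes p: "0 < p"
  shows "(LINT t|lborel. kernel_limit p t) = 1 / (p * g)"
proof -
  have nonneg: "0 \<le> p * t powr (p - 1) * (- ln t) / g" if "t \<in> {0..1}" for t
    using that p g_pos by (intro divide_nonneg_pos mult_nonneg_nonneg) (cases "t = 0"; simp)+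
  have "((\<lambda>t. p * t powr (p - 1) * (- ln t) / g) has_integral 1 / p / g) {0..1}"
    by (intro has_integral_divide has_integral_powr_minus_ln p)
  then have "(\<integral>\<^sup>+ t. ennreal (p * t powr (p - 1) * (- ln t) / g) * indicator {0..1} t \<partial>lborel) = ennreal (1 / (p * g))"
    using nonneg g_pos by (subst nn_integral_has_integral_lebesgue') auto
  moreover have "(\<integral>\<^sup>+ t. ennreal (kernel_limit p t) \<partial>lborel) =
      (\<integral>\<^sup>+ t. ennreal (p * t powr (p - 1) * (- ln t) / g) * indicator {0..1} t \<partial>lborel)"
    by (intro nn_integral_cong) (simp add: kernel_limit_def indicator_def)
  moreover have "(LINT t|lborel. kernel_limit p t) = enn2real (\<integral>\<^sup>+ t. ennreal (kernel_limit p t) \<partial>lborel)"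
    using nonneg g_pos
    by (intro integral_eq_nn_integral) (auto simp: kernel_limit_def indicator_def)
  ultimately show ?thesis
    using p g_pos by simp
qed

lemma tail_kernel_integral_tendsto:
  assumes p: "1 \<le> p"
  shows "((\<lambda>w. (LINT t|lborel. tail_kernel p w t) / (2 * sqrt (Pibar M w))) \<longlongrightarrow> 1 / (p * g)) (at_right 0)"
proof -
  obtain w0 where w0: "0 < w0"
    and bound: "\<And>w t. 0 < w \<Longrightarrow> w \<le> w0 \<Longrightarrow> \<bar>tail_kernel p w t / (2 * sqrt (Pibar M w))\<bar> \<le> kernel_bound p t"
    using tail_kernel_normalized_bound[OF p] by blast
  have "((\<lambda>T. LINT t|lborel. tail_kernel p (inverse T) t / (2 * sqrt (Pibar M (inverse T))))
      \<longlongrightarrow> LINT t|lborel. kernel_limit p t) at_top"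
  proof (rule integral_dominated_convergence_at_top[OF _ _ integrable_kernel_bound[OF p]])
    show "kernel_limit p \<in> borel_measurable lborel"
      unfolding kernel_limit_def by measurable
    show "(\<lambda>t. tail_kernel p (inverse T) t / (2 * sqrt (Pibar M (inverse T)))) \<in> borel_measurable lborel" for T
      by measurable
    show "AE t in lborel. ((\<lambda>T. tail_kernel p (inverse T) t / (2 * sqrt (Pibar M (inverse T))))
        \<longlongrightarrow> kernel_limit p t) at_top"
      using tail_kernel_normalized_tendsto by (simp add: filterlim_at_right_to_top)
    show "\<forall>\<^sub>F T in at_top. AE t in lborel.
        norm (tail_kernel p (inverse T) t / (2 * sqrt (Pibar M (inverse T)))) \<le> kernel_bound p t"
      using eventually_ge_at_top[of "inverse w0"]
    proof eventually_elim
      case (elim T)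
      have "0 < T"
        using w0 elim by (auto intro: less_le_trans[rotated])
      moreover have "inverse T \<le> w0"
        using le_imp_inverse_le[OF elim] w0 by simp
      ultimately show ?case
        using bound[of "inverse T"] by simp
    qed
  qed
  then show ?thesis
    using p g_pos by (simp add: filterlim_at_right_to_top integral_kernel_limit)
qed

lemma set_integral_powr_asymp:
  assumes p: "1 \<le> p"
  shows "(\<lambda>w. LINT u:{0..w}|M. u powr p) \<sim>[at_right 0] (\<lambda>w. 2 / (p * g) * w powr p * sqrt (Pibar M w))"
proof (rule asymp_equivI')
  have "((\<lambda>w. (LINT t|lborel. tail_kernel p w t) / (2 * sqrt (Pibar M w)) * (p * g))
      \<longlongrightarrow> 1 / (p * g) * (p * g)) (at_right 0)"
    by (intro tendsto_intros tail_kernel_integral_tendsto p)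
  moreover have "\<forall>\<^sub>F w in at_right 0. (LINT t|lborel. tail_kernel p w t) / (2 * sqrt (Pibar M w)) * (p * g) =
      (LINT u:{0..w}|M. u powr p) / (2 / (p * g) * w powr p * sqrt (Pibar M w))"
    using eventually_Pibar_ge_1
    by eventually_elim (use p g_pos in \<open>simp add: set_integral_powr_eq_tail_kernel field_simps\<close>)
  ultimately show "((\<lambda>w. (LINT u:{0..w}|M. u powr p) / (2 / (p * g) * w powr p * sqrt (Pibar M w))) \<longlongrightarrow> 1) (at_right 0)"
    using p g_pos by (simp add: tendsto_cong)
qed

lemma asymp_equiv_at_Pibar_inv:
  assumes "f \<sim>[at_right 0] (\<lambda>w. c * h w * sqrt (Pibar M w))"
  shows "(\<lambda>r. f (Pibar_inv M r)) \<sim>[at_top] (\<lambda>r. c * h (Pibar_inv M r) * sqrt r)"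
proof -
  have "(\<lambda>r. f (Pibar_inv M r)) \<sim>[at_top] (\<lambda>r. c * h (Pibar_inv M r) * sqrt (Pibar M (Pibar_inv M r)))"
    by (rule asymp_equiv_compose'[OF assms filterlim_Pibar_inv_at_top])
  then show ?thesis
  proof (rule asymp_equiv_transfer)
    show "\<forall>\<^sub>F r in at_top. c * h (Pibar_inv M r) * sqrt (Pibar M (Pibar_inv M r)) = c * h (Pibar_inv M r) * sqrt r"
      using eventually_ge_at_top[of "Pibar M 1"] by eventually_elim (simp add: Pibar_Pibar_inv(2))
  qed simp
qed

lemma sigma2_asymp: "sigma2 M \<sim>[at_right 0] (\<lambda>w. 1 / g * w\<^sup>2 * sqrt (Pibar M w))"
proof -
  have "(\<lambda>w. LINT u:{0..w}|M. u powr 2) \<sim>[at_right 0] (\<lambda>w. 2 / (2 * g) * w powr 2 * sqrt (Pibar M w))"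
    by (rule set_integral_powr_asymp) simp
  moreover have "(LINT u:{0..w}|M. u powr 2) = sigma2 M w" for w
    unfolding sigma2_def by (intro set_lebesgue_integral_cong) auto
  moreover have "\<forall>\<^sub>F w in at_right 0. 2 / (2 * g) * w powr 2 * sqrt (Pibar M w) = 1 / g * w\<^sup>2 * sqrt (Pibar M w)"
    using eventually_at_right_less[of "0::real"] by eventually_elim simp
  ultimately show ?thesis
    by (auto elim: asymp_equiv_transfer)
qed

lemma Pibar_ratio_limit:
  assumes l: "0 < l"
  shows "((\<lambda>x. Pibar M (l * x) / Pibar M x) \<longlongrightarrow> 1) (at_right 0)"
proof -
  have "((\<lambda>x. (1 + (L (l * x) - L x) * inverse (L x))\<^sup>2) \<longlongrightarrow> (1 + (- ln l) * 0)\<^sup>2) (at_right 0)"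
    by (intro tendsto_intros L_ratio_limit l tendsto_inverse_0_at_top[OF filterlim_L_at_right_0])
  moreover have "\<forall>\<^sub>F x in at_right 0. (1 + (L (l * x) - L x) * inverse (L x))\<^sup>2 = Pibar M (l * x) / Pibar M x"
    using eventually_Pibar_ge_1
  proof eventually_elim
    case (elim x)
    then have "0 < L x"
      using g_pos by (simp add: L_def)
    then have "1 + (L (l * x) - L x) * inverse (L x) = L (l * x) / L x"
      by (simp add: field_simps)
    then show ?case
      using g_pos by (simp add: L_def power_divide Pibar_nonneg)
  qed
  ultimately show ?thesis
    by (simp add: tendsto_cong)
qed

lemma slowvar_Pibar: "slowvar_at_0 (Pibar M)"
  unfolding slowvar_at_0_def regvar_at_0_def
  using eventually_Pibar_ge_1 Pibar_ratio_limit by (auto elim: eventually_mono)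

lemma regvar_sigma2: "regvar_at_0 (sigma2 M) 2"
  unfolding regvar_at_0_def
proof (intro conjI allI impI)
  have "\<forall>\<^sub>F w in at_right 0. sgn (sigma2 M w) = sgn (1 / g * w\<^sup>2 * sqrt (Pibar M w))"
    by (rule asymp_equiv_imp_eventually_same_sign[OF sigma2_asymp])
  then show "\<forall>\<^sub>F w in at_right 0. 0 < sigma2 M w"
    using eventually_Pibar_ge_1 by eventually_elim (use g_pos in \<open>auto simp: sgn_if split: if_splits\<close>)
  fix l :: real
  assume l: "0 < l"
  have "filterlim (\<lambda>w. l * w) (at_right 0) (at_right 0)"
    unfolding filterlim_at
  proof
    show "\<forall>\<^sub>F w in at_right 0. l * w \<in> {0<..} \<and> l * w \<noteq> 0"
      using eventually_at_right_less[of "0::real"] by eventually_elim (use l in simp)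
    have "((\<lambda>w. l * w) \<longlongrightarrow> l * 0) (at_right (0::real))"
      by (intro tendsto_intros)
    then show "((\<lambda>w. l * w) \<longlongrightarrow> 0) (at_right 0)"
      by simp
  qed
  then have "(\<lambda>w. sigma2 M (l * w) / sigma2 M w) \<sim>[at_right 0]
      (\<lambda>w. (1 / g * (l * w)\<^sup>2 * sqrt (Pibar M (l * w))) / (1 / g * w\<^sup>2 * sqrt (Pibar M w)))"
    by (intro asymp_equiv_divide asymp_equiv_compose'[OF sigma2_asymp] sigma2_asymp)
  moreover have "((\<lambda>w. l\<^sup>2 * sqrt (Pibar M (l * w) / Pibar M w)) \<longlongrightarrow> l\<^sup>2 * sqrt 1) (at_right 0)"
    by (intro tendsto_intros Pibar_ratio_limit l)
  moreover have "\<forall>\<^sub>F w in at_right 0. l\<^sup>2 * sqrt (Pibar M (l * w) / Pibar M w) =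
      (1 / g * (l * w)\<^sup>2 * sqrt (Pibar M (l * w))) / (1 / g * w\<^sup>2 * sqrt (Pibar M w))"
    using eventually_Pibar_ge_1
    by eventually_elim (use g_pos in \<open>simp add: real_sqrt_divide field_simps power_mult_distrib\<close>)
  ultimately have "((\<lambda>w. sigma2 M (l * w) / sigma2 M w) \<longlongrightarrow> l\<^sup>2) (at_right 0)"
    by (auto simp: tendsto_cong intro: asymp_equiv_tendsto_transfer[OF asymp_equiv_symI])
  then show "((\<lambda>w. sigma2 M (l * w) / sigma2 M w) \<longlongrightarrow> l powr 2) (at_right 0)"
    using l by simp
qed

lemma regvar_exp_sqrt_Pibar: "regvar_at_0 (\<lambda>x. exp (- sqrt (Pibar M x))) (1 / \<bar>\<gamma>\<bar>)"
  unfolding regvar_at_0_def abs_\<gamma>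
proof (intro conjI allI impI)
  show "\<forall>\<^sub>F x in at_right 0. 0 < exp (- sqrt (Pibar M x))"
    by simp
  fix l :: real
  assume l: "0 < l"
  have "((\<lambda>x. exp (- (L (l * x) - L x) / g)) \<longlongrightarrow> exp (- (- ln l) / g)) (at_right 0)"
    by (intro tendsto_intros L_ratio_limit l) (use g_pos in simp)
  moreover have "exp (- (L (l * x) - L x) / g) = exp (- sqrt (Pibar M (l * x))) / exp (- sqrt (Pibar M x))" for x
    using g_pos by (simp add: L_def exp_diff[symmetric] field_simps)
  ultimately show "((\<lambda>x. exp (- sqrt (Pibar M (l * x))) / exp (- sqrt (Pibar M x))) \<longlongrightarrow> l powr (1 / g)) (at_right 0)"
    using l by (simp add: powr_def)
qed

end

theorem proposition4p1:
  fixes M :: "real measure" and a b :: "real \<Rightarrow> real" and \<gamma> :: real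
  assumes levy: "subordinator_levy_measure M"
    and inf: "infinite_measure M"
    and atoml: "atomless M"
    and a_pos: "\<And>r. a r > 0"
    and \<gamma>_neg: "\<gamma> < 0"
    and conv: "\<And>x. 1 - \<gamma> * x > 0 \<Longrightarrow>
        (\<forall>\<^sub>F r in at_top. a r * x + b r > 0) \<and>
        ((\<lambda>r. (r - Pibar M (a r * x + b r)) / sqrt r)
           \<longlongrightarrow> - (2 / \<gamma>) * ln (1 - \<gamma> * x)) at_top"
  shows "(\<forall>p::real. p \<ge> 1 \<longrightarrow>
            (\<lambda>r. LINT u:{0..Pibar_inv M r}|M. u powr p)
              \<sim>[at_top] (\<lambda>r. 2 / (p * \<bar>\<gamma>\<bar>) * Pibar_inv M r powr p * sqrt r))
       \<and> (\<lambda>r. sigma2 M (Pibar_inv M r))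
              \<sim>[at_top] (\<lambda>r. 1 / \<bar>\<gamma>\<bar> * (Pibar_inv M r)\<^sup>2 * sqrt r)
       \<and> slowvar_at_0 (Pibar M)
       \<and> regvar_at_0 (sigma2 M) 2
       \<and> regvar_at_0 (\<lambda>x. exp (- sqrt (Pibar M x))) (1 / \<bar>\<gamma>\<bar>)"
proof -
  interpret sqrt_tail_scaling M a b \<gamma>
    using levy inf atoml a_pos \<gamma>_neg conv by unfold_locales auto
  have "(\<lambda>r. LINT u:{0..Pibar_inv M r}|M. u powr p)
      \<sim>[at_top] (\<lambda>r. 2 / (p * \<bar>\<gamma>\<bar>) * Pibar_inv M r powr p * sqrt r)" if "1 \<le> p" for p
    using asymp_equiv_at_Pibar_inv[OF set_integral_powr_asymp[OF that]] by (simp add: abs_\<gamma>)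
  moreover have "(\<lambda>r. sigma2 M (Pibar_inv M r)) \<sim>[at_top] (\<lambda>r. 1 / \<bar>\<gamma>\<bar> * (Pibar_inv M r)\<^sup>2 * sqrt r)"
    using asymp_equiv_at_Pibar_inv[OF sigma2_asymp] by (simp add: abs_\<gamma>)
  ultimately show ?thesis
    using slowvar_Pibar regvar_sigma2 regvar_exp_sqrt_Pibar by blast
qed

end
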